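(* Let $0<q<1$. Then \[ \sum_{n=0}^{\infty}\frac{(1+q^{2n+1})\,q^{5n}}{(1-q^{2n-1})^{2}(1-q^{2n+1})^{2}(1-q^{2n+3})^{2}}=\frac{\pi_{q}^{2}(1+q+q^{2})\,q^{3/2}}{(1+q^{2})(1-q^{2})^{6}}. \]
   Context: Let $0<q<1$. With $(z;q)_\infty=\prod_{k\ge0}(1-zq^k)$, Gosper's $q$-pi is $\pi_q=(1-q^2)q^{1/4}\frac{(q^2;q^2)_\infty^2}{(q;q^2)_\infty^2}$. *)

theory Defs
  imports "HOL-Analysis.Analysis"
begin

definition qpoch_inf :: "real \<Rightarrow> real \<Rightarrow> real" where
  "qpoch_inf z q = (\<Prod>k. (1 - z * q ^ k))"

definition gosper_pi_q :: "real \<Rightarrow> real" where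
  "gosper_pi_q q = (1 - q^2) * q powr (1/4) * (qpoch_inf (q^2) (q^2))^2 / (qpoch_inf q (q^2))^2"

end

theory Submission
  imports Defs "HOL-Computational_Algebra.Polynomial"
begin

text \<open>
  The summand extends to all \<open>m \<in> \<int>\<close> and is invariant under \<open>m \<mapsto> -m-1\<close>, so the series is half
  of the bilateral sum. As a rational function of \<open>y = q^m\<close> the summand splits into partial
  fractions whose terms are shifts of \<open>q^m / (1 - q^(2m+1))\<close> and \<open>q^m / (1 - q^(2m+1))^2\<close>.
  The bilateral sum of the first vanishes by antisymmetry under \<open>m \<mapsto> -m-1\<close>; that of the
  second is \<open>\<psi>(q)^4\<close> with \<open>\<psi>(q) = (q^2;q^2)\<^sub>\<infinity> / (q;q^2)\<^sub>\<infinity>\<close>. This evaluation is the limit,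
  by Tannery's theorem, of a finite identity for \<open>((q^2;q^2)\<^sub>N / (q;q^2)\<^sub>N\<^sub>+\<^sub>1)^2\<close> obtained by
  Lagrange interpolation. Finally \<open>\<pi>\<^sub>q^2 q^(3/2) = (1 - q^2)^2 q^2 \<psi>(q)^4\<close>.
\<close>

section \<open>Lagrange interpolation and finite products\<close>

lemma lagrange_interpolation_linear_factors:
  fixes P :: "'a::field poly" and a b x :: "nat \<Rightarrow> 'a"
  assumes deg: "degree P \<le> n"
    and root: "\<And>j. j \<le> n \<Longrightarrow> a j * x j + b j = 0"
    and nonroot: "\<And>j k. j \<le> n \<Longrightarrow> k \<le> n \<Longrightarrow> k \<noteq> j \<Longrightarrow> a k * x j + b k \<noteq> 0"
  shows "poly P y = (\<Sum>j\<le>n. poly P (x j) / (\<Prod>k\<in>{..n}-{j}. a k * x j + b k)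
                              * (\<Prod>k\<in>{..n}-{j}. a k * y + b k))"
proof -
  define c where "c j = poly P (x j) / (\<Prod>k\<in>{..n}-{j}. a k * x j + b k)" for j
  define L where "L j = (\<Prod>k\<in>{..n}-{j}. [:b k, a k:])" for j
  define Q where "Q = P - (\<Sum>j\<le>n. smult (c j) (L j))"
  have poly_L: "poly (L j) z = (\<Prod>k\<in>{..n}-{j}. a k * z + b k)" for j z
    by (simp add: L_def poly_prod algebra_simps)
  have degree_L: "degree (L j) \<le> n" if "j \<le> n" for j
  proof -
    have "degree (L j) \<le> (\<Sum>k\<in>{..n}-{j}. degree [:b k, a k:])"
      unfolding L_def using degree_prod_sum_le[of "{..n}-{j}" "\<lambda>k. [:b k, a k:]"] by (simp add: o_def)
    also have "\<dots> \<le> (\<Sum>k\<in>{..n}-{j}. 1)" by (intro sum_mono) auto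
    also have "\<dots> = n" using that by simp
    finally show ?thesis .
  qed
  have "degree Q \<le> n"
    unfolding Q_def
    by (intro degree_diff_le deg degree_sum_le) (auto intro: order.trans[OF degree_smult_le] degree_L)
  have Q_root: "poly Q (x i) = 0" if i: "i \<le> n" for i
  proof -
    have "(\<Sum>j\<in>{..n}-{i}. c j * poly (L j) (x i)) = 0"
      using i root[OF i] by (intro sum.neutral) (auto simp: poly_L intro!: prod_zero)
    then have "(\<Sum>j\<le>n. c j * poly (L j) (x i)) = c i * poly (L i) (x i)"
      using i by (subst sum.remove[of _ i]) auto
    also have "\<dots> = poly P (x i)"
      using nonroot[OF i] by (simp add: c_def poly_L)
    finally show ?thesis by (simp add: Q_def poly_sum)
  qed
  have "inj_on x {..n}"
    using nonroot root by (fastforce intro: inj_onI)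
  have "Q = 0"
  proof (rule ccontr)
    assume "Q \<noteq> 0"
    have "n + 1 = card (x ` {..n})" using \<open>inj_on x {..n}\<close> by (simp add: card_image)
    also have "\<dots> \<le> card {z. poly Q z = 0}"
      using Q_root \<open>Q \<noteq> 0\<close> by (intro card_mono poly_roots_finite) auto
    also have "\<dots> \<le> degree Q" using \<open>Q \<noteq> 0\<close> by (rule card_poly_roots_bound)
    finally show False using \<open>degree Q \<le> n\<close> by simp
  qed
  then have "poly P y = (\<Sum>j\<le>n. c j * poly (L j) y)"
    by (simp add: Q_def poly_sum)
  then show ?thesis by (simp add: c_def poly_L)
qed

lemma quadratic_in_reciprocal_sum:
  fixes c t :: "'a::field"
  assumes "t \<noteq> 0"
  shows "1 + c^2 - c * (t + 1/t) = (1 - c*t) * (1 - c/t)"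
  using assms by (simp add: field_simps power2_eq_square)

lemma prod_lessThan_add:
  fixes f :: "nat \<Rightarrow> 'a::comm_monoid_mult"
  shows "(\<Prod>k<j+m. f k) = (\<Prod>k<j. f k) * (\<Prod>i<m. f (j+i))"
  by (induction m) (auto simp: mult_ac)

lemma prod_reverse: "(\<Prod>k<j. f k) = (\<Prod>k<j. f (j - Suc k))"
  by (simp add: atLeast0LessThan[symmetric] prod.atLeastLessThan_rev[of f 0 j])

lemma prod_atMost_remove:
  fixes f :: "nat \<Rightarrow> 'a::comm_monoid_mult"
  assumes "j \<le> N"
  shows "(\<Prod>k\<in>{..N}-{j}. f k) = (\<Prod>k<j. f k) * (\<Prod>i<N-j. f (Suc (j+i)))"
proof -
  have split: "{..N}-{j} = {..<j} \<union> (\<lambda>i. Suc (j+i)) ` {..<N-j}"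
  proof safe
    fix k assume "k \<le> N" "k \<noteq> j" "k \<notin> (\<lambda>i. Suc (j+i)) ` {..<N-j}"
    moreover have "j < k \<Longrightarrow> k \<in> (\<lambda>i. Suc (j+i)) ` {..<N-j}"
      using \<open>k \<le> N\<close> by (intro image_eqI[of _ _ "k - Suc j"]) auto
    ultimately show "k < j" by linarith
  qed (use assms in auto)
  show ?thesis
    unfolding split by (subst prod.union_disjoint) (auto simp: prod.reindex inj_on_def)
qed

lemma prod_neg_divide:
  fixes f g :: "nat \<Rightarrow> 'a::field"
  shows "(\<Prod>k<j. - f k / g k) = (-1)^j * (\<Prod>k<j. f k) / (\<Prod>k<j. g k)"
  by (induction j) (auto simp: field_simps)

lemma prod_power_odd: "(\<Prod>k<j. (q::'a::comm_monoid_mult)^(2*k+1)) = q^(j*j)"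
proof -
  have "(\<Sum>k<j. 2*k+1) = j*j" by (induction j) auto
  then show ?thesis unfolding power_sum[symmetric] by (simp only:)
qed

lemma prod_power_even: "(\<Prod>k<j. (q::'a::comm_monoid_mult)^(2*k+2)) = q^(j*(j+1))"
proof -
  have "(\<Sum>k<j. 2*k+2) = j*(j+1)" by (induction j) auto
  then show ?thesis unfolding power_sum[symmetric] by (simp only:)
qed

section \<open>A finite identity\<close>

definition qpoch_odd :: "real \<Rightarrow> nat \<Rightarrow> real" where
  "qpoch_odd q n = (\<Prod>k<n. 1 - q^(2*k+1))"

definition qpoch_even :: "real \<Rightarrow> nat \<Rightarrow> real" where
  "qpoch_even q n = (\<Prod>k<n. 1 - q^(2*k+2))"

definition odd_even_ratio :: "real \<Rightarrow> nat \<Rightarrow> real" where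
  "odd_even_ratio q n = qpoch_odd q n / qpoch_even q n"

text \<open>\<open>lambert_sq_folded q j = lambert_sq q j + lambert_sq q (-j-1)\<close>, see \<open>lambert_sq_folded_eq\<close>.\<close>

definition lambert_sq_folded :: "real \<Rightarrow> nat \<Rightarrow> real" where
  "lambert_sq_folded q j = q^j * (1 + q^(2*j+1)) / (1 - q^(2*j+1))^2"

lemma qpoch_odd_add: "qpoch_odd q (j + m) = qpoch_odd q j * (\<Prod>i<m. 1 - q^(2*i+2*j+1))"
  by (simp add: qpoch_odd_def prod_lessThan_add algebra_simps)

lemma qpoch_even_add: "qpoch_even q (j + m) = qpoch_even q j * (\<Prod>i<m. 1 - q^(2*i+2*j+2))"
  by (simp add: qpoch_even_def prod_lessThan_add algebra_simps)

lemma prod_odd_reflect: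
  assumes "q \<noteq> 0"
  shows "(\<Prod>k<j. 1 - q^(2*k+1) / q^(2*j)) = (-1)^j * qpoch_odd q j / q^(j*j)"
proof -
  have "(\<Prod>k<j. 1 - q^(2*k+1) / q^(2*j)) = (\<Prod>k<j. - (1 - q^(2*k+1)) / q^(2*k+1))"
  proof (subst prod_reverse, intro prod.cong refl)
    fix k assume "k \<in> {..<j}"
    then have "2*j = 2*(j - Suc k)+1 + (2*k+1)" by simp
    then have "q^(2*j) = q^(2*(j - Suc k)+1) * q^(2*k+1)" by (metis power_add)
    then show "1 - q^(2*(j - Suc k)+1) / q^(2*j) = - (1 - q^(2*k+1)) / q^(2*k+1)"
      using assms by (simp add: field_simps)
  qed
  also have "\<dots> = (-1)^j * qpoch_odd q j / q^(j*j)"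
    by (simp only: prod_neg_divide qpoch_odd_def prod_power_odd)
  finally show ?thesis .
qed

lemma prod_even_reflect:
  assumes "q \<noteq> 0"
  shows "(\<Prod>k<j. 1 - q^(2*k) / q^(2*j)) = (-1)^j * qpoch_even q j / q^(j*(j+1))"
proof -
  have "(\<Prod>k<j. 1 - q^(2*k) / q^(2*j)) = (\<Prod>k<j. - (1 - q^(2*k+2)) / q^(2*k+2))"
  proof (subst prod_reverse, intro prod.cong refl)
    fix k assume "k \<in> {..<j}"
    then have "2*j = 2*(j - Suc k) + (2*k+2)" by simp
    then have "q^(2*j) = q^(2*(j - Suc k)) * q^(2*k+2)" by (metis power_add)
    then show "1 - q^(2*(j - Suc k)) / q^(2*j) = - (1 - q^(2*k+2)) / q^(2*k+2)"
      using assms by (simp add: field_simps)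
  qed
  also have "\<dots> = (-1)^j * qpoch_even q j / q^(j*(j+1))"
    by (simp only: prod_neg_divide qpoch_even_def prod_power_even)
  finally show ?thesis .
qed

locale q_in_unit_interval =
  fixes q :: real
  assumes q_pos: "0 < q" and q_less_1: "q < 1"

context q_in_unit_interval
begin

lemma one_minus_power_pos: "0 < n \<Longrightarrow> 0 < 1 - q^n"
  using q_pos q_less_1 by (simp add: power_less_one_iff)

lemma one_minus_power_le_1: "1 - q^n \<le> 1"
  using q_pos by simp

lemma qpoch_odd_pos: "0 < qpoch_odd q n"
  unfolding qpoch_odd_def by (intro prod_pos one_minus_power_pos) simp

lemma qpoch_even_pos: "0 < qpoch_even q n"
  unfolding qpoch_even_def by (intro prod_pos one_minus_power_pos) simp

lemma qpoch_odd_le_1: "qpoch_odd q n \<le> 1"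
  unfolding qpoch_odd_def
  by (intro prod_le_1 conjI less_imp_le[OF one_minus_power_pos] one_minus_power_le_1) simp

lemma qpoch_even_antimono:
  assumes "n \<le> m"
  shows "qpoch_even q m \<le> qpoch_even q n"
proof -
  have "qpoch_even q m = qpoch_even q n * (\<Prod>i<m-n. 1 - q^(2*i+2*n+2))"
    using assms by (metis le_add_diff_inverse qpoch_even_add)
  also have "\<dots> \<le> qpoch_even q n"
    by (intro mult_left_le prod_le_1 conjI less_imp_le[OF one_minus_power_pos]
        less_imp_le[OF qpoch_even_pos] one_minus_power_le_1) simp
  finally show ?thesis .
qed

lemma prod_odd_from_node:
  assumes "j \<le> N"
  shows "(\<Prod>k<N. 1 - q^(2*k+1) / q^(2*j)) = (-1)^j * qpoch_odd q j / q^(j*j) * qpoch_odd q (N-j)"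
proof -
  have "(\<Prod>k<N. 1 - q^(2*k+1) / q^(2*j))
      = (\<Prod>k<j. 1 - q^(2*k+1) / q^(2*j)) * (\<Prod>i<N-j. 1 - q^(2*(j+i)+1) / q^(2*j))"
    using prod_lessThan_add[of "\<lambda>k. 1 - q^(2*k+1) / q^(2*j)" j "N-j"] assms by simp
  also have "(\<Prod>i<N-j. 1 - q^(2*(j+i)+1) / q^(2*j)) = qpoch_odd q (N-j)"
    unfolding qpoch_odd_def using q_pos by (intro prod.cong) (simp_all add: power_add)
  finally show ?thesis
    using q_pos by (simp only: prod_odd_reflect)
qed

lemma prod_odd_shifted:
  "(\<Prod>k<N. 1 - q^(2*k+2*j+3)) = qpoch_odd q (N+j+1) / qpoch_odd q (j+1)"
proof -
  have "qpoch_odd q (N+j+1) = qpoch_odd q (j+1) * (\<Prod>k<N. 1 - q^(2*k+2*(j+1)+1))"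
    using qpoch_odd_add[of q "j+1" N] by (simp only: add_ac)
  also have "(\<Prod>k<N. 1 - q^(2*k+2*(j+1)+1)) = (\<Prod>k<N. 1 - q^(2*k+2*j+3))"
    by (intro prod.cong refl arg_cong[where f="\<lambda>e. 1 - q^e"]) simp
  finally show ?thesis
    using qpoch_odd_pos[of "j+1"] by (simp add: field_simps)
qed

lemma prod_even_from_node:
  assumes "j \<le> N"
  shows "(\<Prod>k\<in>{..N}-{j}. 1 - q^(2*k) / q^(2*j))
       = (-1)^j * qpoch_even q j / q^(j*(j+1)) * qpoch_even q (N-j)"
proof -
  have "(\<Prod>i<N-j. 1 - q^(2 * Suc (j+i)) / q^(2*j)) = qpoch_even q (N-j)"
    unfolding qpoch_even_def using q_pos by (intro prod.cong) (simp_all add: power_add)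
  then show ?thesis
    using q_pos by (simp only: prod_atMost_remove[OF assms] prod_even_reflect)
qed

lemma prod_even_shifted:
  assumes "j \<le> N"
  shows "(\<Prod>k\<in>{..N}-{j}. 1 - q^(2*k+2*j+2))
       = qpoch_even q (N+j+1) / (qpoch_even q j * (1 - q^(4*j+2)))"
proof -
  have "qpoch_even q (N+j+1) = qpoch_even q j * (\<Prod>k\<le>N. 1 - q^(2*k+2*j+2))"
    using qpoch_even_add[of q j "N+1"] by (simp add: lessThan_Suc_atMost algebra_simps)
  also have "(\<Prod>k\<le>N. 1 - q^(2*k+2*j+2)) = (1 - q^(4*j+2)) * (\<Prod>k\<in>{..N}-{j}. 1 - q^(2*k+2*j+2))"
    using assms by (subst prod.remove[of _ j]) (auto simp: algebra_simps)
  finally show ?thesis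
    using qpoch_even_pos[of j] one_minus_power_pos[of "4*j+2"] by (simp add: field_simps)
qed

lemma interpolation_node_quotient:
  assumes "j \<le> N"
  shows "(\<Prod>k<N. (1 - q^(2*k+1) / q^(2*j)) * (1 - q^(2*k+2*j+3)))
         / (\<Prod>k\<in>{..N}-{j}. (1 - q^(2*k) / q^(2*j)) * (1 - q^(2*k+2*j+2)))
       = q^j * (1 + q^(2*j+1)) * odd_even_ratio q (N-j) * odd_even_ratio q (N+j+1)"
proof -
  have odd_succ: "qpoch_odd q (j+1) = qpoch_odd q j * (1 - q^(2*j+1))"
    by (simp add: qpoch_odd_def)
  have diff_squares: "1 - q^(4*j+2) = (1 - q^(2*j+1)) * (1 + q^(2*j+1))"
    by (simp add: algebra_simps power_add[symmetric] mult_2_right[symmetric])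
  have power_split: "q^(j*(j+1)) = q^(j*j) * q^j"
    by (simp add: power_add[symmetric] algebra_simps)
  have "1 - q^(2*j+1) \<noteq> 0" "1 + q^(2*j+1) \<noteq> 0"
    using one_minus_power_pos[of "2*j+1"] zero_less_power[OF q_pos, of "2*j+1"] by linarith+
  then show ?thesis
    unfolding prod.distrib prod_odd_from_node[OF assms] prod_odd_shifted
      prod_even_from_node[OF assms] prod_even_shifted[OF assms] odd_even_ratio_def
      odd_succ diff_squares power_split
    using q_pos qpoch_odd_pos[of j] qpoch_even_pos[of j] qpoch_odd_pos[of "N-j"]
      qpoch_even_pos[of "N-j"] qpoch_odd_pos[of "N+j+1"] qpoch_even_pos[of "N+j+1"]
    by (simp add: field_simps)
qed

lemma interpolation_factor_at_node:
  "1 + (q^(2*k+1))^2 - q^(2*k+1) * (q^(2*j+1) + 1 / q^(2*j+1))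
   = (1 - q^(2*k) / q^(2*j)) * (1 - q^(2*k+2*j+2))"
proof -
  have "1 + (q^(2*k+1))^2 - q^(2*k+1) * (q^(2*j+1) + 1 / q^(2*j+1))
      = (1 - q^(2*k+1) * q^(2*j+1)) * (1 - q^(2*k+1) / q^(2*j+1))"
    using q_pos by (intro quadratic_in_reciprocal_sum) simp
  also have "q^(2*k+1) * q^(2*j+1) = q^(2*k+2*j+2)"
    unfolding power_add[symmetric] by (rule arg_cong[where f="power q"]) simp
  also have "q^(2*k+1) / q^(2*j+1) = q^(2*k) / q^(2*j)"
    using q_pos by (simp add: field_simps)
  finally show ?thesis
    by (simp only: mult.commute)
qed

lemma interpolated_factor_at_node:
  "1 + (q^(2*k+2))^2 - q^(2*k+2) * (q^(2*j+1) + 1 / q^(2*j+1))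
   = (1 - q^(2*k+1) / q^(2*j)) * (1 - q^(2*k+2*j+3))"
proof -
  have "1 + (q^(2*k+2))^2 - q^(2*k+2) * (q^(2*j+1) + 1 / q^(2*j+1))
      = (1 - q^(2*k+2) * q^(2*j+1)) * (1 - q^(2*k+2) / q^(2*j+1))"
    using q_pos by (intro quadratic_in_reciprocal_sum) simp
  also have "q^(2*k+2) * q^(2*j+1) = q^(2*k+2*j+3)"
    unfolding power_add[symmetric] by (rule arg_cong[where f="power q"]) simp
  also have "q^(2*k+2) / q^(2*j+1) = q^(2*k+1) / q^(2*j)"
    using q_pos by (simp add: field_simps)
  finally show ?thesis
    by (simp only: mult.commute)
qed

text \<open>Lagrange interpolation of the degree \<open>N\<close> polynomial \<open>\<Prod>k<N. 1 + c\<^sub>k\<^sup>2 - c\<^sub>k s\<close>,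
  \<open>c\<^sub>k = q^(2k+2)\<close>, at the nodes \<open>s = t + 1/t\<close>, \<open>t = q^(2j+1)\<close> (\<open>j \<le> N\<close>), evaluated at
  \<open>s = 2\<close>, i.e. at \<open>t = 1\<close>: every linear factor \<open>1 + c\<^sup>2 - c s\<close> splits as \<open>(1 - c t) (1 - c/t)\<close>.\<close>

lemma qpoch_even_square_interpolation:
  "qpoch_even q N ^ 2
   = (\<Sum>j\<le>N. (\<Prod>k<N. (1 - q^(2*k+1) / q^(2*j)) * (1 - q^(2*k+2*j+3)))
              / (\<Prod>k\<in>{..N}-{j}. (1 - q^(2*k) / q^(2*j)) * (1 - q^(2*k+2*j+2)))
              * (\<Prod>k\<in>{..N}-{j}. (1 - q^(2*k+1))^2))"
proof -
  define s where "s j = q^(2*j+1) + 1 / q^(2*j+1)" for j :: nat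
  define P where "P = (\<Prod>k<N. [:1 + (q^(2*k+2))^2, -(q^(2*k+2)):])"
  define a where "a k = -(q^(2*k+1))" for k :: nat
  define b where "b k = 1 + (q^(2*k+1))^2" for k :: nat
  have poly_P: "poly P z = (\<Prod>k<N. 1 + (q^(2*k+2))^2 - q^(2*k+2) * z)" for z
    unfolding P_def by (simp add: poly_prod algebra_simps)
  have "degree P \<le> N"
  proof -
    have "degree P \<le> (\<Sum>k<N. degree [:1 + (q^(2*k+2))^2, -(q^(2*k+2)):])"
      unfolding P_def using degree_prod_sum_le[of "{..<N}" "\<lambda>k. [:1 + (q^(2*k+2))^2, -(q^(2*k+2)):]"]
      by (simp add: o_def)
    also have "\<dots> \<le> (\<Sum>k<N. 1)" by (intro sum_mono) auto
    finally show ?thesis by simp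
  qed
  have factor_at_node: "a k * s j + b k = (1 - q^(2*k) / q^(2*j)) * (1 - q^(2*k+2*j+2))" for k j
    unfolding a_def b_def s_def interpolation_factor_at_node[symmetric] by simp
  have factor_at_2: "a k * 2 + b k = (1 - q^(2*k+1))^2" for k
    unfolding a_def b_def by (simp add: algebra_simps power2_eq_square)
  have nonroot: "a k * s j + b k \<noteq> 0" if "k \<noteq> j" for j k
  proof -
    have "q^(2*k) \<noteq> q^(2*j)" using that q_pos q_less_1 by (simp add: power_inject_exp')
    then have "1 - q^(2*k) / q^(2*j) \<noteq> 0" using q_pos by simp
    moreover have "1 - q^(2*k+2*j+2) \<noteq> 0" using one_minus_power_pos[of "2*k+2*j+2"] by linarith
    ultimately show ?thesis unfolding factor_at_node by simp
  qed
  have root: "a j * s j + b j = 0" for j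
    unfolding factor_at_node using q_pos by simp
  have "poly P 2 = qpoch_even q N ^ 2"
    unfolding poly_P qpoch_even_def power2_eq_square prod.distrib[symmetric]
    by (intro prod.cong refl) (simp add: algebra_simps)
  moreover have "poly P (s j) = (\<Prod>k<N. (1 - q^(2*k+1) / q^(2*j)) * (1 - q^(2*k+2*j+3)))" for j
    unfolding poly_P s_def interpolated_factor_at_node ..
  ultimately show ?thesis
    using lagrange_interpolation_linear_factors[OF \<open>degree P \<le> N\<close> root nonroot, where y=2]
    unfolding factor_at_node factor_at_2 by simp
qed

lemma prod_odd_square_remove:
  assumes "j \<le> N"
  shows "(\<Prod>k\<in>{..N}-{j}. (1 - q^(2*k+1))^2) = qpoch_odd q (N+1)^2 / (1 - q^(2*j+1))^2"
proof -
  have "qpoch_odd q (N+1)^2 = (\<Prod>k\<le>N. (1 - q^(2*k+1))^2)"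
    by (simp add: qpoch_odd_def lessThan_Suc_atMost power2_eq_square prod.distrib)
  also have "\<dots> = (1 - q^(2*j+1))^2 * (\<Prod>k\<in>{..N}-{j}. (1 - q^(2*k+1))^2)"
    using assms by (subst prod.remove[of _ j]) auto
  finally show ?thesis
    using one_minus_power_pos[of "2*j+1"] by (simp add: field_simps)
qed

lemma qpoch_even_odd_square_finite:
  "(qpoch_even q N / qpoch_odd q (N+1))^2
   = (\<Sum>j\<le>N. lambert_sq_folded q j * odd_even_ratio q (N-j) * odd_even_ratio q (N+j+1))"
proof -
  have "qpoch_even q N ^ 2
      = (\<Sum>j\<le>N. lambert_sq_folded q j * odd_even_ratio q (N-j) * odd_even_ratio q (N+j+1)
                * qpoch_odd q (N+1)^2)"
    unfolding qpoch_even_square_interpolation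
  proof (intro sum.cong refl)
    fix j assume "j \<in> {..N}"
    then have "j \<le> N" by simp
    then show "(\<Prod>k<N. (1 - q^(2*k+1) / q^(2*j)) * (1 - q^(2*k+2*j+3)))
              / (\<Prod>k\<in>{..N}-{j}. (1 - q^(2*k) / q^(2*j)) * (1 - q^(2*k+2*j+2)))
              * (\<Prod>k\<in>{..N}-{j}. (1 - q^(2*k+1))^2)
        = lambert_sq_folded q j * odd_even_ratio q (N-j) * odd_even_ratio q (N+j+1) * qpoch_odd q (N+1)^2"
      unfolding interpolation_node_quotient[OF \<open>j \<le> N\<close>] prod_odd_square_remove[OF \<open>j \<le> N\<close>]
      by (simp add: lambert_sq_folded_def ac_simps)
  qed
  also have "\<dots> = (\<Sum>j\<le>N. lambert_sq_folded q j * odd_even_ratio q (N-j) * odd_even_ratio q (N+j+1))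
                  * qpoch_odd q (N+1)^2"
    by (simp add: sum_distrib_right)
  finally show ?thesis
    using qpoch_odd_pos[of "N+1"] by (simp add: field_simps)
qed

end

section \<open>Passage to the limit\<close>

lemma qpoch_partial_LIMSEQ:
  fixes x z :: real
  assumes "\<bar>x\<bar> < 1"
  shows "(\<lambda>n. \<Prod>k<n. 1 - z * x^k) \<longlonglongrightarrow> qpoch_inf z x"
proof -
  have "summable (\<lambda>k. \<bar>z\<bar> * \<bar>x\<bar>^k)"
    using assms by (intro summable_mult summable_geometric) (simp only: real_norm_def abs_idempotent)
  moreover have "norm ((1 - z * x^k) - 1) = \<bar>z\<bar> * \<bar>x\<bar>^k" for k
    by (simp add: abs_mult power_abs)
  ultimately have "summable (\<lambda>k. norm ((1 - z * x^k) - 1))"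
    by (simp only:)
  then have "convergent_prod (\<lambda>k. 1 - z * x^k)"
    by (rule abs_convergent_prod_imp_convergent_prod[OF summable_imp_abs_convergent_prod])
  then have "(\<lambda>n. \<Prod>k\<le>n. 1 - z * x^k) \<longlonglongrightarrow> qpoch_inf z x"
    unfolding qpoch_inf_def by (rule convergent_prod_LIMSEQ)
  then have "(\<lambda>n. \<Prod>k<Suc n. 1 - z * x^k) \<longlonglongrightarrow> qpoch_inf z x"
    by (simp only: lessThan_Suc_atMost)
  then show ?thesis
    by (rule LIMSEQ_imp_Suc)
qed

lemma qpoch_inf_pos:
  fixes x z :: real
  assumes "0 \<le> x" "x < 1" "0 \<le> z" "z < 1"
  shows "0 < qpoch_inf z x"
proof -
  have factor_pos: "0 < 1 - z * x^k" for k
    using mult_left_mono[OF power_le_one[of x k], of z] assms by simp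
  have "summable (\<lambda>k. z * x^k)"
    using assms by (intro summable_mult summable_geometric) simp
  then have "summable (\<lambda>k. norm ((1 - z * x^k) - 1))"
    using assms by simp
  then have "convergent_prod (\<lambda>k. 1 - z * x^k)"
    by (rule abs_convergent_prod_imp_convergent_prod[OF summable_imp_abs_convergent_prod])
  then have "qpoch_inf z x \<noteq> 0"
    unfolding qpoch_inf_def by (rule prodinf_nonzero) (use factor_pos in \<open>simp add: less_imp_neq[symmetric]\<close>)
  moreover have "0 \<le> qpoch_inf z x"
  proof (rule LIMSEQ_le_const[OF qpoch_partial_LIMSEQ])
    show "\<bar>x\<bar> < 1" using assms by simp
    show "\<exists>N. \<forall>n\<ge>N. 0 \<le> (\<Prod>k<n. 1 - z * x^k)"
      using factor_pos by (blast intro: prod_nonneg less_imp_le)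
  qed
  ultimately show ?thesis by simp
qed

text \<open>The product form of Ramanujan's \<open>\<psi>(q) = \<Sum>n\<ge>0. q\<^bsup>n(n+1)/2\<^esup>\<close>.\<close>

definition ramanujan_psi :: "real \<Rightarrow> real" where
  "ramanujan_psi q = qpoch_inf (q^2) (q^2) / qpoch_inf q (q^2)"

context q_in_unit_interval
begin

lemma q_square_bounds: "0 \<le> q^2" "q^2 < 1"
  using q_pos q_less_1 by (simp_all add: power_less_one_iff)

lemma qpoch_odd_LIMSEQ: "qpoch_odd q \<longlonglongrightarrow> qpoch_inf q (q^2)"
proof -
  have "qpoch_odd q = (\<lambda>n. \<Prod>k<n. 1 - q * (q^2)^k)"
    by (auto simp: qpoch_odd_def power_mult[symmetric] intro!: prod.cong)
  then show ?thesis using q_square_bounds by (simp add: qpoch_partial_LIMSEQ)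
qed

lemma qpoch_even_LIMSEQ: "qpoch_even q \<longlonglongrightarrow> qpoch_inf (q^2) (q^2)"
proof -
  have "qpoch_even q = (\<lambda>n. \<Prod>k<n. 1 - q^2 * (q^2)^k)"
    by (auto simp: qpoch_even_def power_mult[symmetric] power_add[symmetric] intro!: prod.cong)
  then show ?thesis using q_square_bounds by (simp add: qpoch_partial_LIMSEQ)
qed

lemma qpoch_inf_odd_pos: "0 < qpoch_inf q (q^2)"
  using q_square_bounds q_pos q_less_1 by (intro qpoch_inf_pos) simp_all

lemma qpoch_inf_even_pos: "0 < qpoch_inf (q^2) (q^2)"
  using q_square_bounds by (intro qpoch_inf_pos) simp_all

lemma qpoch_inf_even_le: "qpoch_inf (q^2) (q^2) \<le> qpoch_even q n"
  by (rule LIMSEQ_le_const2[OF qpoch_even_LIMSEQ]) (auto intro: qpoch_even_antimono)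

lemma ramanujan_psi_pos: "0 < ramanujan_psi q"
  unfolding ramanujan_psi_def using qpoch_inf_odd_pos qpoch_inf_even_pos by simp

lemma odd_even_ratio_LIMSEQ: "odd_even_ratio q \<longlonglongrightarrow> 1 / ramanujan_psi q"
proof -
  have "odd_even_ratio q \<longlonglongrightarrow> qpoch_inf q (q^2) / qpoch_inf (q^2) (q^2)"
    unfolding odd_even_ratio_def[abs_def] using qpoch_inf_even_pos
    by (intro tendsto_divide qpoch_odd_LIMSEQ qpoch_even_LIMSEQ) simp
  then show ?thesis by (simp add: ramanujan_psi_def)
qed

lemma odd_even_ratio_bounds:
  "0 \<le> odd_even_ratio q n \<and> odd_even_ratio q n \<le> 1 / qpoch_inf (q^2) (q^2)"
proof
  show "0 \<le> odd_even_ratio q n"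
    using qpoch_odd_pos qpoch_even_pos
    by (simp add: odd_even_ratio_def less_imp_le)
  have "odd_even_ratio q n \<le> 1 / qpoch_even q n"
    unfolding odd_even_ratio_def using qpoch_odd_le_1 qpoch_even_pos
    by (intro divide_right_mono) (simp_all add: less_imp_le)
  also have "\<dots> \<le> 1 / qpoch_inf (q^2) (q^2)"
    using qpoch_inf_even_le qpoch_inf_even_pos by (simp add: frac_le)
  finally show "odd_even_ratio q n \<le> 1 / qpoch_inf (q^2) (q^2)" .
qed

lemma lambert_sq_folded_bounds:
  "0 \<le> lambert_sq_folded q j \<and> lambert_sq_folded q j \<le> 2 * q^j / (1-q)^2"
proof
  have "q^(2*j+1) \<le> q" "0 < q^(2*j+1)"
    using q_pos q_less_1 by (simp_all add: power_le_one)
  then have "(1 + q^(2*j+1)) / (1 - q^(2*j+1))^2 \<le> 2 / (1-q)^2"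
    using q_less_1 by (intro frac_le power_mono) auto
  then have "q^j * ((1 + q^(2*j+1)) / (1 - q^(2*j+1))^2) \<le> q^j * (2 / (1-q)^2)"
    using q_pos by (intro mult_left_mono) auto
  then show "lambert_sq_folded q j \<le> 2 * q^j / (1-q)^2"
    by (simp add: lambert_sq_folded_def mult.commute)
  show "0 \<le> lambert_sq_folded q j"
    using q_pos by (simp add: lambert_sq_folded_def)
qed

lemma finite_sum_term_bound:
  "norm (lambert_sq_folded q j * odd_even_ratio q (N-j) * odd_even_ratio q (N+j+1))
   \<le> 2 * q^j / (1-q)^2 * (1 / qpoch_inf (q^2) (q^2)) * (1 / qpoch_inf (q^2) (q^2))"
proof -
  define B where "B = 1 / qpoch_inf (q^2) (q^2)"
  note bounds = lambert_sq_folded_bounds[of j] odd_even_ratio_bounds[of "N-j"]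
    odd_even_ratio_bounds[of "N+j+1"]
  have "lambert_sq_folded q j * odd_even_ratio q (N-j) * odd_even_ratio q (N+j+1)
      \<le> 2 * q^j / (1-q)^2 * B * B"
    unfolding B_def using bounds qpoch_inf_even_pos q_pos
    by (intro mult_mono) (auto intro: mult_nonneg_nonneg)
  moreover have "norm (lambert_sq_folded q j * odd_even_ratio q (N-j) * odd_even_ratio q (N+j+1))
      = lambert_sq_folded q j * odd_even_ratio q (N-j) * odd_even_ratio q (N+j+1)"
    using bounds by simp
  ultimately show ?thesis
    unfolding B_def by linarith
qed

lemma finite_sum_term_LIMSEQ:
  "(\<lambda>N. lambert_sq_folded q j * odd_even_ratio q (N-j) * odd_even_ratio q (N+j+1))
   \<longlonglongrightarrow> lambert_sq_folded q j / ramanujan_psi q ^ 2"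
proof -
  have "(\<lambda>N. odd_even_ratio q (N-j)) \<longlonglongrightarrow> 1 / ramanujan_psi q"
    by (rule filterlim_compose[OF odd_even_ratio_LIMSEQ filterlim_minus_const_nat_at_top])
  moreover have "(\<lambda>N. odd_even_ratio q (N+j+1)) \<longlonglongrightarrow> 1 / ramanujan_psi q"
    using LIMSEQ_ignore_initial_segment[OF odd_even_ratio_LIMSEQ, of "j+1"] by (simp add: add.assoc)
  ultimately show ?thesis
    using tendsto_mult[OF tendsto_mult[OF tendsto_const]] by (force simp: power2_eq_square)
qed

lemma lambert_sq_folded_sums: "lambert_sq_folded q sums ramanujan_psi q ^ 4"
proof -
  define \<psi> where "\<psi> = ramanujan_psi q"
  define T where "T = lambert_sq_folded q"
  define a where "a j N = (if j \<le> N then T j * odd_even_ratio q (N-j) * odd_even_ratio q (N+j+1) else 0)"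
    for j N
  define M where "M j = 2 * q^j / (1-q)^2 * (1 / qpoch_inf (q^2) (q^2)) * (1 / qpoch_inf (q^2) (q^2))"
    for j
  have "norm (a j N) \<le> M j" for j N
    using finite_sum_term_bound[of j N] q_pos qpoch_inf_even_pos by (simp add: a_def M_def T_def)
  moreover have "summable M"
    unfolding M_def using q_pos q_less_1
    by (intro summable_mult2 summable_divide summable_mult summable_geometric) auto
  moreover have "(\<lambda>N. a j N) \<longlonglongrightarrow> T j / \<psi>^2" for j
  proof (rule Lim_transform_eventually)
    show "(\<lambda>N. T j * odd_even_ratio q (N-j) * odd_even_ratio q (N+j+1)) \<longlonglongrightarrow> T j / \<psi>^2"
      unfolding T_def \<psi>_def by (rule finite_sum_term_LIMSEQ)
    show "\<forall>\<^sub>F N in sequentially. T j * odd_even_ratio q (N-j) * odd_even_ratio q (N+j+1) = a j N"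
      using eventually_ge_at_top[of j] by eventually_elim (simp add: a_def)
  qed
  ultimately have norm_summable: "summable (\<lambda>j. norm (T j / \<psi>^2))"
    and tannery: "(\<lambda>N. \<Sum>j. a j N) \<longlonglongrightarrow> (\<Sum>j. T j / \<psi>^2)"
    using tannerys_theorem[of a "\<lambda>j. T j / \<psi>^2" sequentially M] by (auto intro: always_eventually)
  have "\<psi> > 0"
    unfolding \<psi>_def by (rule ramanujan_psi_pos)
  have "summable (\<lambda>j. T j / \<psi>^2)"
    using norm_summable by (rule summable_norm_cancel)
  then have "summable T"
    using summable_mult[of "\<lambda>j. T j / \<psi>^2" "\<psi>^2"] \<open>\<psi> > 0\<close> by simp
  have "(\<Sum>j. a j N) = (qpoch_even q N / qpoch_odd q (N+1))^2" for N
  proof -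
    have "(\<Sum>j. a j N) = (\<Sum>j\<le>N. a j N)"
      by (rule suminf_finite) (auto simp: a_def)
    then show ?thesis
      unfolding qpoch_even_odd_square_finite a_def T_def by simp
  qed
  moreover have "(\<lambda>N. (qpoch_even q N / qpoch_odd q (N+1))^2) \<longlonglongrightarrow> \<psi>^2"
    unfolding \<psi>_def ramanujan_psi_def using qpoch_inf_odd_pos
    by (intro tendsto_power tendsto_divide qpoch_even_LIMSEQ)
      (simp_all add: LIMSEQ_Suc[OF qpoch_odd_LIMSEQ])
  ultimately have "(\<Sum>j. T j / \<psi>^2) = \<psi>^2"
    using tannery by (metis (no_types, lifting) LIMSEQ_unique ext)
  then have "(\<Sum>j. T j) = \<psi>^4"
    using suminf_divide[OF \<open>summable T\<close>, of "\<psi>^2"] \<open>\<psi> > 0\<close> by (simp add: field_simps)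
  with \<open>summable T\<close> show ?thesis
    by (simp add: sums_iff T_def \<psi>_def)
qed

end

section \<open>Sums over the integers\<close>

lemma has_sum_int_split:
  fixes f :: "int \<Rightarrow> 'a::banach"
  assumes nonneg_part: "summable (\<lambda>n. norm (f (int n)))"
    and neg_part: "summable (\<lambda>n. norm (f (- int n - 1)))"
  shows "(f has_sum ((\<Sum>n. f (int n)) + (\<Sum>n. f (- int n - 1)))) UNIV"
proof -
  define g where "g n = - int n - 1" for n :: nat
  have "((\<lambda>n. f (int n)) has_sum (\<Sum>n. f (int n))) UNIV"
    by (rule norm_summable_imp_has_sum[OF nonneg_part summable_sums[OF summable_norm_cancel[OF nonneg_part]]])
  then have A: "(f has_sum (\<Sum>n. f (int n))) (range int)"
    using has_sum_reindex[of int UNIV f] by (simp add: o_def)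
  have neg_part': "summable (\<lambda>n. norm (f (g n)))"
    using neg_part by (simp add: g_def)
  have "((\<lambda>n. f (g n)) has_sum (\<Sum>n. f (g n))) UNIV"
    by (rule norm_summable_imp_has_sum[OF neg_part' summable_sums[OF summable_norm_cancel[OF neg_part']]])
  then have B: "(f has_sum (\<Sum>n. f (g n))) (range g)"
    using has_sum_reindex[of g UNIV f] by (simp add: o_def inj_on_def g_def)
  have disjoint: "range int \<inter> range g = {}" by (auto simp: g_def)
  have cover: "range int \<union> range g = UNIV"
  proof safe
    fix k :: int assume "k \<notin> range g"
    show "k \<in> range int"
    proof (cases "0 \<le> k")
      case True
      then show ?thesis by (intro range_eqI[of _ _ "nat k"]) simp
    next
      case False
      then have "k = g (nat (- k - 1))" by (simp add: g_def)
      with \<open>k \<notin> range g\<close> show ?thesis by blast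
    qed
  qed auto
  from has_sum_Un_disjoint[OF A B disjoint] show ?thesis
    unfolding cover g_def .
qed

lemma sums_half_of_reflection_symmetric:
  fixes f :: "int \<Rightarrow> real"
  assumes symmetric: "\<And>m. f (- m - 1) = f m" and has_sum: "(f has_sum S) UNIV"
  shows "(\<lambda>n. f (int n)) sums (S / 2)"
proof -
  have "f summable_on range int"
    by (rule summable_on_subset_banach[OF has_sum_imp_summable[OF has_sum] subset_UNIV])
  then have "(f \<circ> int) summable_on UNIV"
    by (simp only: summable_on_reindex[OF inj_on_subset[OF inj_of_nat subset_UNIV]])
  then have "(\<lambda>n. norm ((f \<circ> int) n)) summable_on UNIV"
    by (rule summable_on_iff_abs_summable_on_real[THEN iffD1])
  then have nonneg_part: "summable (\<lambda>n. norm (f (int n)))"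
    unfolding o_def by (rule summable_on_imp_summable)
  then have "(f has_sum (2 * (\<Sum>n. f (int n)))) UNIV"
    using has_sum_int_split[of f] symmetric by simp
  then have "(\<Sum>n. f (int n)) = S / 2"
    using has_sum_unique[OF has_sum] by simp
  with summable_norm_cancel[OF nonneg_part] show ?thesis
    by (simp add: sums_iff)
qed

lemma has_sum_int_shift:
  fixes f :: "int \<Rightarrow> 'a::topological_comm_monoid_add"
  assumes "(f has_sum S) UNIV"
  shows "((\<lambda>m. f (m + k)) has_sum S) UNIV"
proof -
  have "bij_betw (\<lambda>m. m + k) UNIV UNIV"
    by (rule bij_betwI[of _ _ _ "\<lambda>m. m - k"]) auto
  then show ?thesis
    using assms has_sum_reindex_bij_betw by blast
qed

lemma power_int_affine:
  fixes x :: "'a::field"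
  assumes "x \<noteq> 0"
  shows "x powi (int a * m + b) = (x powi m)^a * x powi b"
proof -
  have "x powi (int a * m + b) = x powi (m * int a) * x powi b"
    using assms by (simp add: power_int_add mult.commute)
  also have "x powi (m * int a) = (x powi m)^a"
    by (simp only: power_int_power')
  finally show ?thesis .
qed

lemma power_int_neq_1:
  fixes x :: real
  assumes "0 < x" "x < 1" "k \<noteq> 0"
  shows "x powi k \<noteq> 1"
proof -
  have "x powi k < 1 \<or> 1 < x powi k"
    using assms power_int_strict_decreasing[of 0 k x] power_int_strict_decreasing[of k 0 x]
    by (cases "0 < k") auto
  then show ?thesis by auto
qed

section \<open>Partial fractions\<close>

text \<open>The numerators of \<open>series_rational_partial_fractions\<close> with the denominators cleared,
  in terms of \<open>u = y\<^sup>2\<close>.\<close>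

lemma series_partial_fraction_polynomial:
  fixes q u :: real
  shows "q^2 * ((1 + q*u) * u^2) * ((1-q^2)^5 * (1+q^2))
    = (q^3*(1-q^2)) * q * (1-q*u)^2 * (1-q^3*u)^2
    + (-(q^3*(2+q^2))) * (q-u) * (1-q*u)^2 * (1-q^3*u)^2
    + (2*q^2*(1-q^2)*(1+q^2)) * (q-u)^2 * (1-q^3*u)^2
    + (-(q^2*(1-q^2)*(1+q^2))) * (q-u)^2 * (1-q*u) * (1-q^3*u)^2
    + (q^3*(1-q^2)) * q * (q-u)^2 * (1-q*u)^2
    + (q^3*(1+2*q^2)) * q * (q-u)^2 * (1-q*u)^2 * (1-q^3*u)"
  by algebra

lemma partial_fractions_from_numerators:
  fixes q y E A B C W c1 c2 c3 c4 c5 c6 :: real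
  assumes "q \<noteq> 0" "W \<noteq> 0" "A \<noteq> 0" "B \<noteq> 0" "C \<noteq> 0"
    and numerators: "q^2 * E * W = c1 * q * B^2 * C^2 + c2 * A * B^2 * C^2 + c3 * A^2 * C^2
      + c4 * A^2 * B * C^2 + c5 * q * A^2 * B^2 + c6 * q * A^2 * B^2 * C"
  shows "y * E / ((A/q)^2 * B^2 * C^2)
    = (c1 * ((y/q) / (A/q)^2) + c2 * ((y/q) / (A/q)) + c3 * (y / B^2) + c4 * (y / B)
       + c5 * ((y*q) / C^2) + c6 * ((y*q) / C)) / W"
proof -
  have "E = (q^2 * E * W) / (q^2 * W)"
    using assms(1,2) by simp
  also have "\<dots> = (c1 * q * B^2 * C^2 + c2 * A * B^2 * C^2 + c3 * A^2 * C^2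
      + c4 * A^2 * B * C^2 + c5 * q * A^2 * B^2 + c6 * q * A^2 * B^2 * C) / (q^2 * W)"
    by (simp only: numerators)
  finally have E: "E = \<dots>" .
  show ?thesis
    unfolding E using assms(1-5) by (simp add: field_simps power2_eq_square)
qed

definition series_rational :: "real \<Rightarrow> real \<Rightarrow> real" where
  "series_rational q y = (1 + q*y^2) * y^5 / ((1 - y^2/q)^2 * (1 - q*y^2)^2 * (1 - q^3*y^2)^2)"

lemma series_rational_partial_fractions:
  fixes q y :: real
  assumes "q \<noteq> 0" "1 - q^2 \<noteq> 0" "1 - y^2/q \<noteq> 0" "1 - q*y^2 \<noteq> 0" "1 - q^3*y^2 \<noteq> 0"
  shows "series_rational q y =
    (q^3*(1-q^2) * ((y/q) / (1 - q*(y/q)^2)^2) - q^3*(2+q^2) * ((y/q) / (1 - q*(y/q)^2))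
     + 2*q^2*(1-q^2)*(1+q^2) * (y / (1 - q*y^2)^2) - q^2*(1-q^2)*(1+q^2) * (y / (1 - q*y^2))
     + q^3*(1-q^2) * ((y*q) / (1 - q*(y*q)^2)^2) + q^3*(1+2*q^2) * ((y*q) / (1 - q*(y*q)^2)))
    / ((1-q^2)^5 * (1+q^2))"
proof -
  have rescale: "q*(y/q)^2 = y^2/q" "q*(y*q)^2 = q^3*y^2"
    using assms(1) by (simp_all add: power2_eq_square power3_eq_cube)
  have shifted: "1 - y^2/q = (q - y^2) / q"
    using assms(1) by (simp add: field_simps)
  have "0 < 1 + q^2"
    by (simp add: add_pos_nonneg)
  then have "(1-q^2)^5 * (1+q^2) \<noteq> 0"
    using assms(2) by simp
  moreover have "q - y^2 \<noteq> 0"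
    using assms(3) unfolding shifted by simp
  ultimately have pf: "y * ((1 + q*y^2) * (y^2)^2) / (((q - y^2)/q)^2 * (1 - q*y^2)^2 * (1 - q^3*y^2)^2)
    = ((q^3*(1-q^2)) * ((y/q) / ((q - y^2)/q)^2) + (-(q^3*(2+q^2))) * ((y/q) / ((q - y^2)/q))
     + (2*q^2*(1-q^2)*(1+q^2)) * (y / (1 - q*y^2)^2) + (-(q^2*(1-q^2)*(1+q^2))) * (y / (1 - q*y^2))
     + (q^3*(1-q^2)) * ((y*q) / (1 - q^3*y^2)^2) + (q^3*(1+2*q^2)) * ((y*q) / (1 - q^3*y^2)))
    / ((1-q^2)^5 * (1+q^2))"
    using assms(1,4,5) by (intro partial_fractions_from_numerators series_partial_fraction_polynomial)
  have y5: "(1 + q*y^2) * y^5 = y * ((1 + q*y^2) * (y^2)^2)"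
    by algebra
  show ?thesis
    unfolding rescale series_rational_def shifted y5 pf by simp
qed

text \<open>The reflection \<open>m \<mapsto> -m-1\<close> acts on \<open>y = q powi m\<close> as \<open>y \<mapsto> 1/(q y)\<close>.\<close>

lemma series_rational_reflect:
  fixes q y :: real
  assumes "q \<noteq> 0" "y \<noteq> 0" "1 - y^2/q \<noteq> 0" "1 - q*y^2 \<noteq> 0" "1 - q^3*y^2 \<noteq> 0"
  shows "series_rational q (1 / (q*y)) = series_rational q y"
proof -
  have sq: "(1 / (q*y))^2 / q = 1 / (q^3*y^2)" "q * (1 / (q*y))^2 = 1 / (q*y^2)"
    "q^3 * (1 / (q*y))^2 = q / y^2"
    using assms(1,2) by (simp_all add: field_simps power2_eq_square power3_eq_cube)
  have fac: "1 - 1 / (q^3*y^2) = - (1 - q^3*y^2) / (q^3*y^2)"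
    "1 - 1 / (q*y^2) = - (1 - q*y^2) / (q*y^2)"
    "1 - q / y^2 = - (1 - y^2/q) * q / y^2"
    "1 + 1 / (q*y^2) = (1 + q*y^2) / (q*y^2)"
    using assms(1,2) by (simp_all add: field_simps)
  show ?thesis
    unfolding series_rational_def sq fac using assms
    by (simp add: power_divide power_mult_distrib field_simps) algebra
qed

lemma lambert_sq_reflect_rational:
  fixes q y :: real
  assumes "q \<noteq> 0" "y \<noteq> 0" "1 - q * y^2 \<noteq> 0"
  shows "(1 / (q * y)) / (1 - q * (1 / (q * y))^2)^2 = q * y^3 / (1 - q * y^2)^2"
proof -
  have "1 - q * (1 / (q * y))^2 = - (1 - q * y^2) / (q * y^2)"
    using assms by (simp add: field_simps power2_eq_square)
  then show ?thesis
    using assms by (simp add: power_divide field_simps power2_eq_square power3_eq_cube)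
qed

lemma lambert_reflect_rational:
  fixes q y :: real
  assumes "q \<noteq> 0" "y \<noteq> 0" "1 - q * y^2 \<noteq> 0"
  shows "(1 / (q * y)) / (1 - q * (1 / (q * y))^2) = - (y / (1 - q * y^2))"
proof -
  have "1 - q * (1 / (q * y))^2 = - (1 - q * y^2) / (q * y^2)"
    using assms by (simp add: field_simps power2_eq_square)
  then show ?thesis
    using assms by (simp add: field_simps power2_eq_square)
qed

section \<open>Bilateral Lambert series and the main theorem\<close>

definition lambert :: "real \<Rightarrow> int \<Rightarrow> real" where
  "lambert q m = q powi m / (1 - q powi (2*m+1))"

definition lambert_sq :: "real \<Rightarrow> int \<Rightarrow> real" where
  "lambert_sq q m = q powi m / (1 - q powi (2*m+1))^2"

definition series_term :: "real \<Rightarrow> int \<Rightarrow> real" where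
  "series_term q m = (1 + q powi (2*m+1)) * q powi (5*m) /
     ((1 - q powi (2*m-1))^2 * (1 - q powi (2*m+1))^2 * (1 - q powi (2*m+3))^2)"

lemma series_term_of_nat:
  "series_term q (int n) = (1 + q ^ (2*n+1)) * q ^ (5*n) /
     ((1 - q powi (2 * int n - 1))^2 * (1 - q ^ (2*n+1))^2 * (1 - q ^ (2*n+3))^2)"
proof -
  have "2 * int n + 1 = int (2*n+1)" "5 * int n = int (5*n)" "2 * int n + 3 = int (2*n+3)"
    by simp_all
  then show ?thesis
    unfolding series_term_def by (simp only: power_int_of_nat)
qed

context q_in_unit_interval
begin

lemma power_int_odd: "q powi (2*m+1) = q * (q powi m)^2"
  using power_int_affine[of q 2 m 1] q_pos by simp

lemma power_int_even_shift: "q powi (2*m + c) = (q powi m)^2 * q powi c"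
  using power_int_affine[of q 2 m c] q_pos by simp

lemma power_int_odd_minus: "q powi (2*m - 1) = (q powi m)^2 / q"
  using power_int_even_shift[of m "-1"] by (simp add: power_int_minus divide_inverse)

lemma power_int_odd_plus_3: "q powi (2*m + 3) = q^3 * (q powi m)^2"
  using power_int_even_shift[of m 3] by (simp add: mult.commute)

lemma power_int_reflect: "q powi (- m - 1) = 1 / (q * q powi m)"
  using q_pos by (simp add: power_int_diff power_int_minus divide_inverse)

lemma one_minus_power_int_neq_0:
  assumes "k \<noteq> 0"
  shows "1 - q powi k \<noteq> 0"
  using power_int_neq_1[OF q_pos q_less_1 assms] by simp

lemma lambert_denominator_neq_0: "1 - q * (q powi m)^2 \<noteq> 0"
proof -
  have "1 - q powi (2*m+1) \<noteq> 0"
    by (rule one_minus_power_int_neq_0) presburger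
  then show ?thesis
    by (metis power_int_odd)
qed

lemma shifted_denominators_neq_0: "1 - (q powi m)^2 / q \<noteq> 0" "1 - q^3 * (q powi m)^2 \<noteq> 0"
proof -
  have "1 - q powi (2*m-1) \<noteq> 0" "1 - q powi (2*m+3) \<noteq> 0"
    by (rule one_minus_power_int_neq_0, presburger)+
  then show "1 - (q powi m)^2 / q \<noteq> 0" "1 - q^3 * (q powi m)^2 \<noteq> 0"
    by (simp_all only: power_int_odd_minus power_int_odd_plus_3 not_False_eq_True)
qed

lemma lambert_sq_reflect: "lambert_sq q (- m - 1) = q * (q powi m)^3 / (1 - q * (q powi m)^2)^2"
  unfolding lambert_sq_def power_int_odd power_int_reflect
  using q_pos lambert_denominator_neq_0[of m] by (intro lambert_sq_reflect_rational) simp_all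

lemma lambert_reflect: "lambert q (- m - 1) = - lambert q m"
  unfolding lambert_def power_int_odd power_int_reflect
  using q_pos lambert_denominator_neq_0[of m] by (intro lambert_reflect_rational) simp_all

lemma lambert_sq_folded_eq: "lambert_sq_folded q n = lambert_sq q (int n) + lambert_sq q (- int n - 1)"
proof -
  define y where "y = q^n"
  have odd: "q^(2*n+1) = q * y^2"
    unfolding y_def by (simp add: power_mult[symmetric] mult.commute)
  have "lambert_sq q (int n) = y / (1 - q * y^2)^2"
    unfolding lambert_sq_def power_int_odd y_def by simp
  moreover have "lambert_sq q (- int n - 1) = q * y^3 / (1 - q * y^2)^2"
    unfolding lambert_sq_reflect y_def by simp
  ultimately show ?thesis
    unfolding lambert_sq_folded_def y_def[symmetric] odd
    by (simp add: add_divide_distrib[symmetric] algebra_simps power3_eq_cube power2_eq_square)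
qed

lemma lambert_sq_nonneg: "0 \<le> lambert_sq q m"
  using q_pos by (simp add: lambert_sq_def)

lemma lambert_sq_has_sum: "(lambert_sq q has_sum ramanujan_psi q ^ 4) UNIV"
proof -
  have folded: "summable (lambert_sq_folded q)"
    using lambert_sq_folded_sums by (simp add: sums_iff)
  have nonneg_part: "summable (\<lambda>n. norm (lambert_sq q (int n)))"
    by (rule summable_comparison_test[OF _ folded])
      (use lambert_sq_nonneg lambert_sq_folded_eq in auto)
  have neg_part: "summable (\<lambda>n. norm (lambert_sq q (- int n - 1)))"
    by (rule summable_comparison_test[OF _ folded])
      (use lambert_sq_nonneg lambert_sq_folded_eq in auto)
  have "(\<Sum>n. lambert_sq q (int n)) + (\<Sum>n. lambert_sq q (- int n - 1)) = (\<Sum>n. lambert_sq_folded q n)"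
    unfolding lambert_sq_folded_eq
    using summable_norm_cancel[OF nonneg_part] summable_norm_cancel[OF neg_part]
    by (simp add: suminf_add)
  also have "\<dots> = ramanujan_psi q ^ 4"
    using lambert_sq_folded_sums by (simp add: sums_iff)
  finally show ?thesis
    using has_sum_int_split[OF nonneg_part neg_part] by simp
qed

lemma lambert_has_sum_0: "(lambert q has_sum 0) UNIV"
proof -
  have bound: "norm (lambert q (int n)) \<le> q^n / (1 - q)" for n
  proof -
    have "2 * int n + 1 = int (2*n+1)" by simp
    then have "q powi (2 * int n + 1) = q^(2*n+1)"
      by (simp only: power_int_of_nat)
    then have "lambert q (int n) = q^n / (1 - q^(2*n+1))"
      by (simp add: lambert_def)
    moreover have "q^(2*n+1) \<le> q"
      using q_pos q_less_1 by (simp add: power_le_one)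
    moreover have "0 < 1 - q" "0 < q^n"
      using q_pos q_less_1 by simp_all
    ultimately show ?thesis
      by (simp add: frac_le)
  qed
  have "summable (\<lambda>n. q^n / (1 - q))"
    using q_pos q_less_1 by (intro summable_divide summable_geometric) simp
  then have nonneg_part: "summable (\<lambda>n. norm (lambert q (int n)))"
    by (rule summable_comparison_test[rotated]) (use bound in simp)
  then have neg_part: "summable (\<lambda>n. norm (lambert q (- int n - 1)))"
    by (simp add: lambert_reflect)
  have "(\<Sum>n. lambert q (- int n - 1)) = - (\<Sum>n. lambert q (int n))"
    unfolding lambert_reflect by (rule suminf_minus[OF summable_norm_cancel[OF nonneg_part]])
  then show ?thesis
    using has_sum_int_split[OF nonneg_part neg_part] by simp
qed

lemma series_term_eq: "series_term q m = series_rational q (q powi m)"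
proof -
  have "q powi (5*m) = (q powi m)^5"
    using power_int_affine[of q 5 m 0] q_pos by simp
  then show ?thesis
    unfolding series_term_def series_rational_def power_int_odd power_int_odd_minus
      power_int_odd_plus_3 by simp
qed

lemma series_term_reflect: "series_term q (- m - 1) = series_term q m"
  unfolding series_term_eq power_int_reflect using q_pos
  by (intro series_rational_reflect shifted_denominators_neq_0 lambert_denominator_neq_0) simp_all

lemma series_term_partial_fractions:
  "series_term q m =
    (q^3*(1-q^2) * lambert_sq q (m-1) - q^3*(2+q^2) * lambert q (m-1)
     + 2*q^2*(1-q^2)*(1+q^2) * lambert_sq q m - q^2*(1-q^2)*(1+q^2) * lambert q m
     + q^3*(1-q^2) * lambert_sq q (m+1) + q^3*(1+2*q^2) * lambert q (m+1))
    / ((1-q^2)^5 * (1+q^2))"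
proof -
  define y where "y = q powi m"
  have shifts: "q powi (m-1) = y/q" "q powi (m+1) = y*q"
    using q_pos unfolding y_def by (simp_all add: power_int_diff power_int_add_1)
  have "1 - q^2 \<noteq> 0"
    using one_minus_power_pos[of 2] by simp
  then show ?thesis
    unfolding lambert_sq_def lambert_def shifts power_int_odd series_term_eq y_def[symmetric]
    using q_pos shifted_denominators_neq_0[of m] lambert_denominator_neq_0[of m]
    by (intro series_rational_partial_fractions) (simp_all add: y_def)
qed

lemma series_term_has_sum:
  "(series_term q has_sum 2 * (q^2*(1+q+q^2) / ((1-q^2)^4 * (1+q^2)) * ramanujan_psi q ^ 4)) UNIV"
proof -
  define S where "S = ramanujan_psi q ^ 4"
  have sq: "((\<lambda>m. lambert_sq q (m + k)) has_sum S) UNIV" for k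
    unfolding S_def by (rule has_sum_int_shift[OF lambert_sq_has_sum])
  have lin: "((\<lambda>m. lambert q (m + k)) has_sum 0) UNIV" for k
    by (rule has_sum_int_shift[OF lambert_has_sum_0])
  have "((\<lambda>m. (q^3*(1-q^2) * lambert_sq q (m + -1) + - (q^3*(2+q^2) * lambert q (m + -1))
      + 2*q^2*(1-q^2)*(1+q^2) * lambert_sq q (m + 0) + - (q^2*(1-q^2)*(1+q^2) * lambert q (m + 0))
      + q^3*(1-q^2) * lambert_sq q (m + 1) + q^3*(1+2*q^2) * lambert q (m + 1))
      / ((1-q^2)^5 * (1+q^2)))
    has_sum (q^3*(1-q^2) * S + - (q^3*(2+q^2) * 0) + 2*q^2*(1-q^2)*(1+q^2) * S
      + - (q^2*(1-q^2)*(1+q^2) * 0) + q^3*(1-q^2) * S + q^3*(1+2*q^2) * 0)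
      / ((1-q^2)^5 * (1+q^2))) UNIV" (is "(?F has_sum ?N / ?W) UNIV")
    by (intro has_sum_divide_const has_sum_add has_sum_uminusI has_sum_cmult_right sq lin)
  moreover have "?F = series_term q"
    by (rule ext) (simp add: series_term_partial_fractions)
  moreover have "?N / ?W = 2 * (q^2*(1+q+q^2) / ((1-q^2)^4 * (1+q^2)) * S)"
  proof -
    have "1 - q^2 \<noteq> 0"
      using one_minus_power_pos[of 2] by simp
    have num: "?N = (1-q^2) * (2 * (q^2*(1+q+q^2) * S))"
      by algebra
    have den: "?W = (1-q^2) * ((1-q^2)^4 * (1+q^2))"
      by algebra
    show ?thesis
      unfolding num den by (subst mult_divide_mult_cancel_left[OF \<open>1 - q^2 \<noteq> 0\<close>]) simp
  qed
  ultimately show ?thesis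
    unfolding S_def by simp
qed

lemma series_term_sums:
  "(\<lambda>n. series_term q (int n)) sums (q^2*(1+q+q^2) / ((1-q^2)^4 * (1+q^2)) * ramanujan_psi q ^ 4)"
  using sums_half_of_reflection_symmetric[OF series_term_reflect series_term_has_sum] by simp

lemma gosper_pi_q_square:
  "gosper_pi_q q ^ 2 * q powr (3/2) = (1 - q^2)^2 * q^2 * ramanujan_psi q ^ 4"
proof -
  have "(q powr (1/4))^2 * q powr (3/2) = q powr (1/4 + 1/4 + 3/2)"
    by (simp only: power2_eq_square powr_add)
  also have "\<dots> = q^2"
    using q_pos by (simp add: powr_numeral)
  finally have powers: "(q powr (1/4))^2 * q powr (3/2) = q^2" .
  have "gosper_pi_q q ^ 2 = (1 - q^2)^2 * (q powr (1/4))^2 * ramanujan_psi q ^ 4"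
    unfolding gosper_pi_q_def ramanujan_psi_def
    by (simp add: power_mult_distrib power_divide field_simps power2_eq_square power4_eq_xxxx)
  then have "gosper_pi_q q ^ 2 * q powr (3/2)
      = (1 - q^2)^2 * ((q powr (1/4))^2 * q powr (3/2)) * ramanujan_psi q ^ 4"
    by (simp add: ac_simps)
  then show ?thesis
    by (simp only: powers)
qed

lemma series_sum_eq_gosper:
  "q^2 * (1+q+q^2) / ((1-q^2)^4 * (1+q^2)) * ramanujan_psi q ^ 4
   = gosper_pi_q q ^ 2 * (1 + q + q^2) * q powr (3/2) / ((1 + q^2) * (1 - q^2)^6)"
proof -
  have "(1 - q^2)^2 \<noteq> 0"
    using one_minus_power_pos[of 2] by simp
  have num: "gosper_pi_q q ^ 2 * (1 + q + q^2) * q powr (3/2)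
      = (1 - q^2)^2 * (q^2 * (1 + q + q^2) * ramanujan_psi q ^ 4)"
    using gosper_pi_q_square by (simp add: ac_simps)
  have den: "(1 + q^2) * (1 - q^2)^6 = (1 - q^2)^2 * ((1 - q^2)^4 * (1 + q^2))"
    by algebra
  show ?thesis
    unfolding num den mult_divide_mult_cancel_left[OF \<open>(1 - q^2)^2 \<noteq> 0\<close>] by simp
qed

end

theorem mainTheorem16:
  fixes q :: real
  assumes "0 < q" and "q < 1"
  shows "(\<lambda>n::nat. (1 + q ^ (2*n+1)) * q ^ (5*n) /
            ((1 - q powi (2 * int n - 1))^2 * (1 - q ^ (2*n+1))^2 * (1 - q ^ (2*n+3))^2))
         sums (gosper_pi_q q ^ 2 * (1 + q + q^2) * q powr (3/2) / ((1 + q^2) * (1 - q^2)^6))"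
proof -
  interpret q_in_unit_interval q
    using assms by unfold_locales
  show ?thesis
    using series_term_sums unfolding series_term_of_nat series_sum_eq_gosper .
qed

end
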